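(* Let $x,y\in W_0^J$ and let $\sigma\in\mathbb{Q}$ with $0<\sigma<1$. Assume there is a directed $\sigma$-path $x=w_0\xleftarrow{\beta_1}w_1\xleftarrow{\beta_2}\cdots\xleftarrow{\beta_n}w_n=y$ from $y$ to $x$ in the parabolic quantum Bruhat graph. Then $\sigma(x\Lambda-y\Lambda)\in Q_0:=\bigoplus_{j\in I_0}\mathbb{Z}\alpha_j$.
   Context: Let $\Delta_0$ be the finite root system (simple roots $\alpha_j$, coroots $\alpha_j^\vee$, $j\in I_0$) of the finite-dimensional simple Lie algebra underlying an untwisted affine Lie algebra, with positive roots $\Delta_0^+$ and Weyl group $W_0$ generated by simple reflections $r_j$. Let $\lambda=\sum_{i\in I_0}m_i\varpi_i$ ($m_i\in\mathbb{Z}_{\ge0}$) be a level-zero dominant integral weight and $\Lambda$ its class modulo $\mathbb{C}\delta$, with $\langle\Lambda,\alpha_j^\vee\rangle=m_j$ and $W_0$ acting on it. Let $J=\{j\in I_0\mid m_j=0\}$, $W_J=\langle r_j\mid j\in J\rangle$, $\Delta_J^+=\Delta_0^+\cap\bigoplus_{j\in J}\mathbb{Z}\alpha_j$, $W_0^J$ the minimal-length representatives of $W_0/W_J$, $\lfloor w\rfloor$ the representative of $wW_J$, $\ell$ the length, $\rho$, $\rho_J$ the half-sums of positive roots of $\Delta_0$, $\Delta_J$. The parabolic quantum Bruhat graph has vertices $W_0^J$ and an edge $\lfloor wr_\beta\rfloor\xleftarrow{\beta}w$ for $w\in W_0^J$, $\beta\in\Delta_0^+\setminus\Delta_J^+$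 whenever $\ell(\lfloor wr_\beta\rfloor)=\ell(w)+1$ or $\ell(\lfloor wr_\beta\rfloor)=\ell(w)-2\langle\rho-\rho_J,\beta^\vee\rangle+1$. A directed path from $y$ to $x$ is a chain of edges $x=w_0\xleftarrow{\beta_1}w_1\xleftarrow{}\cdots\xleftarrow{\beta_n}w_n=y$; it is a directed $\sigma$-path if $\sigma\langle\Lambda,\beta_k^\vee\rangle\in\mathbb{Z}$ for all $1\le k\le n$. *)

theory Defs
  imports "HOL-Analysis.Analysis"
begin

definition coroot :: "'a::euclidean_space \<Rightarrow> 'a" where
  "coroot b = (2 / (b \<bullet> b)) *\<^sub>R b"

definition pair :: "'a::euclidean_space \<Rightarrow> 'a \<Rightarrow> real" where
  "pair v b = v \<bullet> coroot b"

definition refl :: "'a::euclidean_space \<Rightarrow> 'a \<Rightarrow> 'a" where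
  "refl b v = v - pair v b *\<^sub>R b"

definition root_system :: "'a::euclidean_space set \<Rightarrow> bool" where
  "root_system R \<longleftrightarrow> finite R \<and> 0 \<notin> R \<and> span R = UNIV
     \<and> (\<forall>a\<in>R. \<forall>b\<in>R. refl a b \<in> R \<and> pair b a \<in> \<int>)
     \<and> (\<forall>a\<in>R. \<forall>c. c *\<^sub>R a \<in> R \<longrightarrow> c = 1 \<or> c = -1)"

definition irreducible_rs :: "'a::euclidean_space set \<Rightarrow> bool" where
  "irreducible_rs R \<longleftrightarrow> \<not> (\<exists>A B. A \<union> B = R \<and> A \<inter> B = {} \<and> A \<noteq> {} \<and> B \<noteq> {}
      \<and> (\<forall>a\<in>A. \<forall>b\<in>B. a \<bullet> b = 0))"

definition int_comb :: "'a::euclidean_space set \<Rightarrow> 'a \<Rightarrow> (int \<Rightarrow> bool) \<Rightarrow> bool" where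
  "int_comb X v P \<longleftrightarrow> (\<exists>c :: 'a \<Rightarrow> int. v = (\<Sum>s\<in>X. of_int (c s) *\<^sub>R s) \<and> (\<forall>s\<in>X. P (c s)))"

definition root_lattice :: "'a::euclidean_space set \<Rightarrow> 'a set" where
  "root_lattice S = {v. int_comb S v (\<lambda>_. True)}"

definition simple_system :: "'a::euclidean_space set \<Rightarrow> 'a set \<Rightarrow> bool" where
  "simple_system R S \<longleftrightarrow> S \<subseteq> R \<and> independent S
     \<and> (\<forall>b\<in>R. int_comb S b (\<lambda>n. n \<ge> 0) \<or> int_comb S b (\<lambda>n. n \<le> 0))"

definition pos_roots :: "'a::euclidean_space set \<Rightarrow> 'a set \<Rightarrow> 'a set" where
  "pos_roots R S = {b\<in>R. int_comb S b (\<lambda>n. n \<ge> 0)}"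

definition pos_roots_J :: "'a::euclidean_space set \<Rightarrow> 'a set \<Rightarrow> 'a set \<Rightarrow> 'a set" where
  "pos_roots_J R S J = {b\<in>pos_roots R S. int_comb J b (\<lambda>_. True)}"

definition rho :: "'a::euclidean_space set \<Rightarrow> 'a" where
  "rho X = (1/2) *\<^sub>R (\<Sum>b\<in>X. b)"

definition word_fun :: "'a::euclidean_space list \<Rightarrow> 'a \<Rightarrow> 'a" where
  "word_fun ws = foldr (\<lambda>s f. refl s \<circ> f) ws id"

definition weyl :: "'a::euclidean_space set \<Rightarrow> ('a \<Rightarrow> 'a) set" where
  "weyl S = {word_fun ws | ws. set ws \<subseteq> S}"

definition wlen :: "'a::euclidean_space set \<Rightarrow> ('a \<Rightarrow> 'a) \<Rightarrow> nat" where
  "wlen S w = (LEAST n. \<exists>ws. set ws \<subseteq> S \<and> length ws = n \<and> word_fun ws = w)"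

definition minreps :: "'a::euclidean_space set \<Rightarrow> 'a set \<Rightarrow> ('a \<Rightarrow> 'a) set" where
  "minreps S J = {w \<in> weyl S. \<forall>u\<in>weyl J. wlen S w \<le> wlen S (w \<circ> u)}"

definition floorJ :: "'a::euclidean_space set \<Rightarrow> 'a set \<Rightarrow> ('a \<Rightarrow> 'a) \<Rightarrow> ('a \<Rightarrow> 'a)" where
  "floorJ S J w = (THE u. u \<in> minreps S J \<and> u \<in> (\<lambda>v. w \<circ> v) ` weyl J)"

text \<open>Edge  u <--beta-- w  of the parabolic quantum Bruhat graph.\<close>
definition qbg_edge :: "'a::euclidean_space set \<Rightarrow> 'a set \<Rightarrow> 'a set \<Rightarrow>
    ('a \<Rightarrow> 'a) \<Rightarrow> 'a \<Rightarrow> ('a \<Rightarrow> 'a) \<Rightarrow> bool" where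
  "qbg_edge R S J u b w \<longleftrightarrow> w \<in> minreps S J \<and> b \<in> pos_roots R S - pos_roots_J R S J
     \<and> u = floorJ S J (w \<circ> refl b)
     \<and> (wlen S u = wlen S w + 1
        \<or> real (wlen S u) = real (wlen S w)
             - 2 * pair (rho (pos_roots R S) - rho (pos_roots_J R S J)) b + 1)"

text \<open>Directed path x = ws!0 <--bs!0-- ws!1 <-- ... <--bs!(n-1)-- ws!n = y.\<close>
definition qbg_path :: "'a::euclidean_space set \<Rightarrow> 'a set \<Rightarrow> 'a set \<Rightarrow>
    ('a \<Rightarrow> 'a) list \<Rightarrow> 'a list \<Rightarrow> bool" where
  "qbg_path R S J ws bs \<longleftrightarrow> length ws = Suc (length bs)
     \<and> (\<forall>k < length bs. qbg_edge R S J (ws ! k) (bs ! k) (ws ! Suc k))"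

end

theory Submission
  imports Defs
begin

text \<open>Along an edge  u <-beta- w  we have u = w r_beta v with v in W_J. Since Lambda is orthogonal
  to J, v fixes Lambda, so u Lambda - w Lambda = -<Lambda, beta^vee> w beta, and sigma times this
  is an integer multiple of the root w beta. Summing over the edges of the path gives the claim.

  The substance lies in u in w r_beta W_J: r_beta lies in W_0 because every positive root is
  W_0-conjugate to a simple root, and the minimal representative of a coset w W_J is unique,
  because a minimal representative maps the positive roots of J to positive roots.\<close>

lemma pair_eq: "pair v b = 2 * (v \<bullet> b) / (b \<bullet> b)"
  unfolding pair_def coroot_def by simp

lemma refl_eq: "refl b v = v - (2 * (v \<bullet> b) / (b \<bullet> b)) *\<^sub>R b"
  unfolding refl_def pair_eq by (simp add: inner_commute)

lemma linear_refl: "linear (refl b)"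
  unfolding refl_eq
  by (rule linearI) (auto simp: inner_add_left algebra_simps add_divide_distrib diff_divide_distrib)

lemma inner_refl_refl: "refl b x \<bullet> refl b y = x \<bullet> y"
  by (cases "b \<bullet> b = 0")
     (simp_all add: refl_eq inner_diff_left inner_diff_right field_simps inner_commute power2_eq_square)

lemma refl_refl [simp]: "refl b (refl b x) = x"
proof (cases "b \<bullet> b = 0")
  case True
  then show ?thesis by (simp add: refl_eq)
next
  case False
  then have "pair (refl b x) b = - pair x b"
    by (simp add: refl_def pair_eq inner_diff_left field_simps)
  then show ?thesis by (simp add: refl_def)
qed

lemma refl_self: "b \<noteq> 0 \<Longrightarrow> refl b b = - b"
  by (simp add: refl_eq scaleR_2)

lemma word_fun_Nil [simp]: "word_fun [] = id"
  by (simp add: word_fun_def)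

lemma word_fun_Cons [simp]: "word_fun (a # ws) = refl a \<circ> word_fun ws"
  by (simp add: word_fun_def)

lemma word_fun_append: "word_fun (xs @ ys) = word_fun xs \<circ> word_fun ys"
  by (induction xs) auto

lemma linear_word_fun: "linear (word_fun ws)"
proof (induction ws)
  case Nil
  then show ?case using linear_id by (simp add: id_def)
next
  case (Cons a ws)
  then show ?case using linear_compose[OF Cons linear_refl] by (simp add: o_def)
qed

lemma inner_word_fun: "word_fun ws x \<bullet> word_fun ws y = x \<bullet> y"
  by (induction ws arbitrary: x y) (auto simp: inner_refl_refl)

lemma refl_word_fun: "refl (word_fun ws a) (word_fun ws x) = word_fun ws (refl a x)"
  by (simp add: refl_def pair_eq inner_word_fun linear_diff[OF linear_word_fun] linear_scale[OF linear_word_fun])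

lemma word_fun_rev_cancel [simp]: "word_fun ws (word_fun (rev ws) x) = x"
  by (induction ws arbitrary: x) (auto simp: word_fun_append)

lemma word_fun_in_weyl: "set ws \<subseteq> X \<Longrightarrow> word_fun ws \<in> weyl X"
  unfolding weyl_def by blast

lemma id_in_weyl: "id \<in> weyl X"
  using word_fun_in_weyl[of "[]"] by simp

lemma comp_in_weyl: "u \<in> weyl X \<Longrightarrow> v \<in> weyl X \<Longrightarrow> u \<circ> v \<in> weyl X"
  unfolding weyl_def by (clarsimp, metis Un_subset_iff set_append word_fun_append)

lemma weyl_mono: "X \<subseteq> Y \<Longrightarrow> weyl X \<subseteq> weyl Y"
  unfolding weyl_def by blast

lemma linear_weyl: "w \<in> weyl X \<Longrightarrow> linear w"
  unfolding weyl_def using linear_word_fun by blast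

lemma weyl_fixes_orthogonal:
  assumes "\<forall>s\<in>J. pair v s = 0" and "u \<in> weyl J"
  shows "u v = v"
proof -
  obtain us where "set us \<subseteq> J" "u = word_fun us" using assms(2) unfolding weyl_def by blast
  then show ?thesis by (induction us arbitrary: u) (use assms(1) in \<open>auto simp: refl_def\<close>)
qed

lemma wlen_le: "set ws \<subseteq> X \<Longrightarrow> wlen X (word_fun ws) \<le> length ws"
  unfolding wlen_def by (rule Least_le) blast

lemma reduced_word_exists:
  assumes "w \<in> weyl X"
  obtains ws where "set ws \<subseteq> X" "length ws = wlen X w" "word_fun ws = w"
proof -
  have "\<exists>ws. set ws \<subseteq> X \<and> length ws = wlen X w \<and> word_fun ws = w"
    unfolding wlen_def by (rule LeastI_ex) (use assms in \<open>auto simp: weyl_def\<close>)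
  then show ?thesis using that by blast
qed

lemma int_comb_mono: "int_comb X x P \<Longrightarrow> (\<And>n. P n \<Longrightarrow> Q n) \<Longrightarrow> int_comb X x Q"
  unfolding int_comb_def by blast

lemma int_comb_zero: "P 0 \<Longrightarrow> int_comb X 0 P"
  unfolding int_comb_def by (intro exI[of _ "\<lambda>_. 0"]) simp

lemma int_comb_add:
  assumes "int_comb X x P" "int_comb X y P" and "\<And>m n. P m \<Longrightarrow> P n \<Longrightarrow> P (m + n)"
  shows "int_comb X (x + y) P"
proof -
  obtain c d where "x = (\<Sum>s\<in>X. of_int (c s) *\<^sub>R s)" "y = (\<Sum>s\<in>X. of_int (d s) *\<^sub>R s)"
    and "\<forall>s\<in>X. P (c s) \<and> P (d s)"
    using assms(1,2) unfolding int_comb_def by blast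
  then show ?thesis unfolding int_comb_def using assms(3)
    by (intro exI[of _ "\<lambda>s. c s + d s"]) (simp add: sum.distrib scaleR_add_left)
qed

lemma int_comb_scale:
  assumes "int_comb X x P" and "\<And>n. P n \<Longrightarrow> Q (k * n)"
  shows "int_comb X (of_int k *\<^sub>R x) Q"
proof -
  obtain c where "x = (\<Sum>s\<in>X. of_int (c s) *\<^sub>R s)" "\<forall>s\<in>X. P (c s)"
    using assms(1) unfolding int_comb_def by blast
  then show ?thesis unfolding int_comb_def using assms(2)
    by (intro exI[of _ "\<lambda>s. k * c s"]) (simp add: scaleR_sum_right)
qed

lemma int_comb_sum:
  assumes "finite K" "P 0" "\<And>m n. P m \<Longrightarrow> P n \<Longrightarrow> P (m + n)"
    and "\<And>k. k \<in> K \<Longrightarrow> int_comb X (f k) P"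
  shows "int_comb X (sum f K) P"
  using assms(1,4) by (induction K) (simp_all add: int_comb_zero int_comb_add assms(2,3))

lemma int_comb_generator:
  assumes "finite X" "s \<in> X" "P 0" "P 1"
  shows "int_comb X s P"
proof -
  have delta: "(\<lambda>t. of_int (if t = s then 1 else 0) *\<^sub>R t) = (\<lambda>t. if t = s then s else 0)"
    by auto
  have "(\<Sum>t\<in>X. of_int (if t = s then 1 else 0) *\<^sub>R t) = s"
    unfolding delta using assms(1,2) by simp
  then show ?thesis unfolding int_comb_def using assms(3,4)
    by (intro exI[of _ "\<lambda>t. if t = s then 1 else 0"]) auto
qed

lemma root_lattice_diff:
  "x \<in> root_lattice X \<Longrightarrow> y \<in> root_lattice X \<Longrightarrow> x - y \<in> root_lattice X"
  unfolding root_lattice_def using int_comb_add[of X x _ "- y"] int_comb_scale[of X y _ _ "-1"] by simp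

lemma root_lattice_scale: "x \<in> root_lattice X \<Longrightarrow> of_int k *\<^sub>R x \<in> root_lattice X"
  unfolding root_lattice_def by (simp add: int_comb_scale)

lemma root_lattice_sum:
  "finite K \<Longrightarrow> (\<And>k. k \<in> K \<Longrightarrow> f k \<in> root_lattice X) \<Longrightarrow> sum f K \<in> root_lattice X"
  unfolding root_lattice_def by (simp add: int_comb_sum)

lemma refl_in_root_lattice:
  assumes "finite X" "a \<in> X" "pair y a \<in> \<int>" "y \<in> root_lattice X"
  shows "refl a y \<in> root_lattice X"
proof -
  obtain k where "pair y a = of_int k" using assms(3) by (elim Ints_cases)
  moreover have "a \<in> root_lattice X"
    unfolding root_lattice_def using assms(1,2) by (simp add: int_comb_generator)
  ultimately show ?thesis
    unfolding refl_def using assms(4) by (simp add: root_lattice_diff root_lattice_scale)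
qed

lemma nonneg_comb_image:
  assumes "finite J" "linear u" "\<And>j. j \<in> J \<Longrightarrow> int_comb S (u j) (\<lambda>n. 0 \<le> n)"
    and "int_comb J x (\<lambda>n. 0 \<le> n)"
  shows "int_comb S (u x) (\<lambda>n. 0 \<le> n)"
proof -
  obtain c where c: "x = (\<Sum>j\<in>J. of_int (c j) *\<^sub>R j)" "\<forall>j\<in>J. 0 \<le> c j"
    using assms(4) unfolding int_comb_def by blast
  have "u x = (\<Sum>j\<in>J. of_int (c j) *\<^sub>R u j)"
    unfolding c(1) by (simp add: linear_sum[OF assms(2)] linear_scale[OF assms(2)])
  also have "int_comb S \<dots> (\<lambda>n. 0 \<le> n)"
    using assms(1,3) c(2) by (intro int_comb_sum int_comb_scale[where P = "\<lambda>n. 0 \<le> n"]) auto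
  finally show ?thesis .
qed

lemma weyl_inverse_exists:
  assumes "v \<in> weyl X"
  obtains v' where "v' \<in> weyl X" "v \<circ> v' = id"
proof -
  obtain vs where "set vs \<subseteq> X" "v = word_fun vs" using assms unfolding weyl_def by blast
  then have "word_fun (rev vs) \<in> weyl X" "v \<circ> word_fun (rev vs) = id"
    using word_fun_in_weyl[of "rev vs" X] by auto
  then show ?thesis using that by blast
qed

locale simple_root_system =
  fixes R S :: "'a::euclidean_space set"
  assumes root_system: "root_system R" and simple_system: "simple_system R S"
begin

abbreviation pos :: "'a \<Rightarrow> bool" where "pos x \<equiv> int_comb S x (\<lambda>n. 0 \<le> n)"
abbreviation neg :: "'a \<Rightarrow> bool" where "neg x \<equiv> int_comb S x (\<lambda>n. n \<le> 0)"

definition comb :: "('a \<Rightarrow> int) \<Rightarrow> 'a" where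
  "comb c = (\<Sum>s\<in>S. of_int (c s) *\<^sub>R s)"

lemma finite_R: "finite R" and zero_notin_R: "0 \<notin> R"
  and refl_in_R: "a \<in> R \<Longrightarrow> b \<in> R \<Longrightarrow> refl a b \<in> R"
  and pair_in_Ints: "a \<in> R \<Longrightarrow> b \<in> R \<Longrightarrow> pair b a \<in> \<int>"
  and scaleR_root: "a \<in> R \<Longrightarrow> c *\<^sub>R a \<in> R \<Longrightarrow> c = 1 \<or> c = -1"
  using root_system unfolding root_system_def by auto

lemma S_subset_R: "S \<subseteq> R" and independent_S: "independent S"
  and pos_or_neg: "b \<in> R \<Longrightarrow> pos b \<or> neg b"
  using simple_system unfolding simple_system_def by auto

lemma finite_S: "finite S"
  using S_subset_R finite_R finite_subset by blast

lemma pos_iff_comb: "pos x \<longleftrightarrow> (\<exists>c. x = comb c \<and> (\<forall>s\<in>S. 0 \<le> c s))"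
  unfolding int_comb_def comb_def by simp

lemma neg_iff_comb: "neg x \<longleftrightarrow> (\<exists>c. x = comb c \<and> (\<forall>s\<in>S. c s \<le> 0))"
  unfolding int_comb_def comb_def by simp

lemma comb_diff: "comb (\<lambda>t. c t - d t) = comb c - comb d"
  unfolding comb_def by (simp add: sum_subtractf scaleR_diff_left)

lemma comb_delta:
  assumes "a \<in> S"
  shows "comb (\<lambda>t. if t = a then k else 0) = of_int k *\<^sub>R a"
proof -
  have delta: "(\<lambda>t. of_int (if t = a then k else 0) *\<^sub>R t) = (\<lambda>t. if t = a then of_int k *\<^sub>R a else 0)"
    by auto
  show ?thesis unfolding comb_def delta using assms finite_S by simp
qed

lemma comb_coeff_unique:
  assumes "comb c = comb d" "s \<in> S"
  shows "c s = d s"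
proof (rule ccontr)
  assume "c s \<noteq> d s"
  moreover have "(\<Sum>t\<in>S. real_of_int (c t - d t) *\<^sub>R t) = 0"
    using comb_diff[of c d] assms(1) by (simp add: comb_def)
  ultimately have "dependent S"
    using assms(2) unfolding real_vector.dependent_finite[OF finite_S]
    by (intro exI[of _ "\<lambda>t. real_of_int (c t - d t)"]) auto
  with independent_S show False by simp
qed

lemma root_not_pos_and_neg:
  assumes "x \<in> R" "pos x" "neg x"
  shows False
proof -
  obtain c d where c: "x = comb c" "\<forall>s\<in>S. 0 \<le> c s" and d: "x = comb d" "\<forall>s\<in>S. d s \<le> 0"
    using assms(2,3) unfolding pos_iff_comb neg_iff_comb by blast
  have "c s = 0" if "s \<in> S" for s
    using comb_coeff_unique[of c d s] c d that by force
  then have "x = 0" unfolding c(1) comb_def by simp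
  with assms(1) zero_notin_R show False by simp
qed

lemma simple_root_pos: "s \<in> S \<Longrightarrow> pos s"
  using finite_S by (simp add: int_comb_generator)

lemma word_fun_in_R: "set ws \<subseteq> S \<Longrightarrow> x \<in> R \<Longrightarrow> word_fun ws x \<in> R"
  by (induction ws) (use S_subset_R refl_in_R in auto)

lemma weyl_in_R: "w \<in> weyl S \<Longrightarrow> x \<in> R \<Longrightarrow> w x \<in> R"
  unfolding weyl_def using word_fun_in_R by blast

lemma root_in_root_lattice: "x \<in> R \<Longrightarrow> x \<in> root_lattice S"
  unfolding root_lattice_def using pos_or_neg[of x] int_comb_mono[of S x _ "\<lambda>_. True"] by auto

lemma refl_simple_comb:
  assumes "a \<in> S" "comb c \<in> R"
  obtains k where "refl a (comb c) = comb (\<lambda>t. c t - (if t = a then k else 0))"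
    and "pair (comb c) a = of_int k"
proof -
  have "pair (comb c) a \<in> \<int>" using assms pair_in_Ints S_subset_R by blast
  then obtain k where k: "pair (comb c) a = of_int k" by (elim Ints_cases)
  then have "refl a (comb c) = comb (\<lambda>t. c t - (if t = a then k else 0))"
    using assms(1) by (simp add: refl_def comb_diff comb_delta)
  with k that show ?thesis by blast
qed

lemma refl_simple_pos:
  assumes a: "a \<in> S" and g: "g \<in> R" "pos g" "g \<noteq> a"
  shows "pos (refl a g)"
proof (rule ccontr)
  assume "\<not> pos (refl a g)"
  moreover have "refl a g \<in> R" using a g S_subset_R refl_in_R by auto
  ultimately obtain d where d: "refl a g = comb d" "\<forall>t\<in>S. d t \<le> 0"
    using pos_or_neg neg_iff_comb by blast
  obtain c where c: "g = comb c" "\<forall>t\<in>S. 0 \<le> c t" using g pos_iff_comb by blast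
  obtain k where k: "refl a g = comb (\<lambda>t. c t - (if t = a then k else 0))"
    using refl_simple_comb a g c by metis
  have "c t = 0" if t: "t \<in> S" "t \<noteq> a" for t
  proof -
    have "c t - (if t = a then k else 0) = d t"
      using k d(1) by (intro comb_coeff_unique[OF _ t(1)]) simp
    then show ?thesis using c(2) d(2) t by force
  qed
  then have "g = comb (\<lambda>t. if t = a then c a else 0)"
    unfolding c(1) comb_def by (intro sum.cong) auto
  then have ga: "g = of_int (c a) *\<^sub>R a" using a by (simp add: comb_delta)
  then have "real_of_int (c a) = 1 \<or> real_of_int (c a) = -1"
    using scaleR_root[of a "real_of_int (c a)"] a g(1) S_subset_R by auto
  then have "c a = 1" using c(2) a by force
  with ga g(3) show False by simp
qed

lemma deletion_condition:
  assumes "set ws \<subseteq> S" "s \<in> S" "\<not> pos (word_fun ws s)"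
  shows "\<exists>i<length ws. word_fun ws \<circ> refl s = word_fun (take i ws @ drop (Suc i) ws)"
  using assms
proof (induction ws)
  case Nil
  then show ?case using simple_root_pos by simp
next
  case (Cons a ws)
  show ?case
  proof (cases "pos (word_fun ws s)")
    case False
    have "\<exists>i<length ws. word_fun ws \<circ> refl s = word_fun (take i ws @ drop (Suc i) ws)"
      by (rule Cons.IH) (use Cons.prems False in auto)
    then obtain i where i: "i < length ws"
      "word_fun ws \<circ> refl s = word_fun (take i ws @ drop (Suc i) ws)"
      by blast
    have "word_fun (a # ws) \<circ> refl s = word_fun (a # take i ws @ drop (Suc i) ws)"
      by (simp only: word_fun_Cons comp_assoc i(2))
    with i(1) show ?thesis by (intro exI[of _ "Suc i"]) (simp del: word_fun_Cons)
  next
    case True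
    have "word_fun ws s \<in> R" using Cons.prems S_subset_R word_fun_in_R by auto
    then have a: "word_fun ws s = a" using refl_simple_pos[of a "word_fun ws s"] True Cons.prems by auto
    have "word_fun (a # ws) \<circ> refl s = word_fun ws"
    proof
      fix x
      have "refl a (word_fun ws (refl s x)) = refl a (refl (word_fun ws s) (word_fun ws x))"
        by (simp add: refl_word_fun)
      then show "(word_fun (a # ws) \<circ> refl s) x = word_fun ws x" by (simp add: a)
    qed
    then show ?thesis by (intro exI[of _ 0]) (simp del: word_fun_Cons)
  qed
qed

lemma wlen_comp_refl_less:
  assumes "X \<subseteq> S" "w \<in> weyl X" "s \<in> X" "\<not> pos (w s)"
  shows "wlen X (w \<circ> refl s) < wlen X w"
proof -
  obtain ws where ws: "set ws \<subseteq> X" "length ws = wlen X w" "word_fun ws = w"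
    using reduced_word_exists[OF assms(2)] .
  obtain i where i: "i < length ws" "w \<circ> refl s = word_fun (take i ws @ drop (Suc i) ws)"
    using deletion_condition[of ws s] assms ws by auto
  have "set (take i ws @ drop (Suc i) ws) \<subseteq> X"
    using ws(1) set_take_subset set_drop_subset by fastforce
  then have "wlen X (w \<circ> refl s) \<le> length (take i ws @ drop (Suc i) ws)"
    unfolding i(2) by (rule wlen_le)
  also have "\<dots> < wlen X w" using i(1) ws(2) by simp
  finally show ?thesis .
qed

lemma minreps_pos:
  assumes "J \<subseteq> S" "u \<in> minreps S J" "j \<in> J"
  shows "pos (u j)"
proof (rule ccontr)
  assume "\<not> pos (u j)"
  then have "wlen S (u \<circ> refl j) < wlen S u"
    using wlen_comp_refl_less[of S u j] assms unfolding minreps_def by blast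
  moreover have "refl j \<in> weyl J" using word_fun_in_weyl[of "[j]" J] assms(3) by simp
  ultimately show False using assms(2) unfolding minreps_def by force
qed

lemma pos_root_inner_simple_pos:
  assumes "b \<in> R" "b = comb c" "\<forall>t\<in>S. 0 \<le> c t"
  shows "\<exists>s\<in>S. 0 < b \<bullet> s"
proof (rule ccontr)
  assume "\<not> ?thesis"
  then have "of_int (c t) * (b \<bullet> t) \<le> 0" if "t \<in> S" for t
    using assms(3) that by (simp add: mult_nonneg_nonpos not_less)
  then have "(\<Sum>t\<in>S. of_int (c t) * (b \<bullet> t)) \<le> 0" by (intro sum_nonpos) auto
  moreover have "b \<bullet> b = (\<Sum>t\<in>S. of_int (c t) * (b \<bullet> t))"
    by (subst (2) assms(2)) (simp add: comb_def inner_sum_right)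
  moreover have "0 < b \<bullet> b" using assms(1) zero_notin_R by auto
  ultimately show False by linarith
qed

lemma refl_simple_height_less:
  assumes s: "s \<in> S" and b: "b \<in> R" "b = comb c" "\<forall>t\<in>S. 0 \<le> c t" "b \<noteq> s" "0 < b \<bullet> s"
  obtains e where "refl s b = comb e" "\<forall>t\<in>S. 0 \<le> e t" "sum e S < sum c S"
proof -
  obtain k where k: "refl s b = comb (\<lambda>t. c t - (if t = s then k else 0))" "pair b s = of_int k"
    using refl_simple_comb[of s c] s b by metis
  have "0 < s \<bullet> s" using s S_subset_R zero_notin_R by auto
  then have "0 < pair b s" using b(5) by (simp add: pair_eq)
  with k(2) have "k > 0" by simp
  have "pos b" unfolding pos_iff_comb using b(2,3) by blast
  then have "pos (refl s b)" by (rule refl_simple_pos[OF s b(1) _ b(4)])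
  then obtain e where e: "refl s b = comb e" "\<forall>t\<in>S. 0 \<le> e t" unfolding pos_iff_comb by blast
  have "comb e = comb (\<lambda>t. c t - (if t = s then k else 0))" using e(1) k(1) by simp
  then have "e t = c t - (if t = s then k else 0)" if "t \<in> S" for t
    using comb_coeff_unique that by blast
  then have "sum e S = (\<Sum>t\<in>S. c t - (if t = s then k else 0))" by (rule sum.cong[OF refl])
  also have "\<dots> = sum c S - k" using s finite_S by (simp add: sum_subtractf)
  finally have "sum e S = sum c S - k" .
  with e \<open>k > 0\<close> that show ?thesis by simp
qed

lemma pos_root_conj_simple:
  assumes "b \<in> R" "pos b"
  obtains ws a where "set ws \<subseteq> S" "a \<in> S" "b = word_fun ws a"
proof -
  have "\<exists>ws a. set ws \<subseteq> S \<and> a \<in> S \<and> b = word_fun ws a"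
    if "b \<in> R" "b = comb c" "\<forall>t\<in>S. 0 \<le> c t" "nat (sum c S) = n" for n b c
    using that
  proof (induction n arbitrary: b c rule: less_induct)
    case (less n)
    obtain s where s: "s \<in> S" "0 < b \<bullet> s"
      using pos_root_inner_simple_pos less.prems(1-3) by blast
    show ?case
    proof (cases "b = s")
      case True
      with s show ?thesis by (intro exI[of _ "[]"] exI[of _ s]) simp
    next
      case False
      obtain e where e: "refl s b = comb e" "\<forall>t\<in>S. 0 \<le> e t" "sum e S < sum c S"
        using refl_simple_height_less[OF s(1) less.prems(1-3) False s(2)] .
      have "0 \<le> sum e S" using e(2) by (simp add: sum_nonneg)
      with e(3) less.prems(4) have "nat (sum e S) < n" by linarith
      moreover have "refl s b \<in> R" using s less.prems S_subset_R refl_in_R by auto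
      ultimately obtain ws a where wa: "set ws \<subseteq> S" "a \<in> S" "refl s b = word_fun ws a"
        using less.IH[OF _ _ e(1,2) refl] by blast
      have "b = word_fun (s # ws) a" using arg_cong[OF wa(3), of "refl s"] by simp
      with wa s show ?thesis by (intro exI[of _ "s # ws"] exI[of _ a]) simp
    qed
  qed
  moreover obtain c where "b = comb c" "\<forall>t\<in>S. 0 \<le> c t"
    using assms(2) unfolding pos_iff_comb by blast
  ultimately show ?thesis using assms(1) that by blast
qed

lemma refl_in_weyl:
  assumes "b \<in> R" "pos b"
  shows "refl b \<in> weyl S"
proof -
  obtain ws a where wa: "set ws \<subseteq> S" "a \<in> S" "b = word_fun ws a"
    using pos_root_conj_simple[OF assms] .
  have "refl b = word_fun (ws @ a # rev ws)"
  proof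
    fix x
    have "word_fun (ws @ a # rev ws) x = word_fun ws (refl a (word_fun (rev ws) x))"
      by (simp add: word_fun_append)
    also have "\<dots> = refl (word_fun ws a) (word_fun ws (word_fun (rev ws) x))"
      by (simp only: refl_word_fun)
    finally show "refl b x = word_fun (ws @ a # rev ws) x" using wa(3) by simp
  qed
  with wa show ?thesis using word_fun_in_weyl[of "ws @ a # rev ws" S] by auto
qed

lemma word_fun_in_root_lattice:
  assumes "J \<subseteq> S" "set vs \<subseteq> J" "x \<in> R" "x \<in> root_lattice J"
  shows "word_fun vs x \<in> root_lattice J"
  using assms(2)
proof (induction vs)
  case Nil
  then show ?case using assms(4) by simp
next
  case (Cons a vs)
  have "word_fun vs x \<in> R" using Cons.prems assms(1,3) word_fun_in_R by auto
  then have "pair (word_fun vs x) a \<in> \<int>" using Cons.prems assms(1) S_subset_R pair_in_Ints by auto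
  moreover have "finite J" using assms(1) finite_S finite_subset by blast
  ultimately show ?case using Cons by (simp add: refl_in_root_lattice)
qed

lemma pos_in_sub_root_lattice:
  assumes "J \<subseteq> S" "pos x" "x \<in> root_lattice J"
  shows "int_comb J x (\<lambda>n. 0 \<le> n)"
proof -
  obtain c where c: "x = comb c" "\<forall>t\<in>S. 0 \<le> c t" using assms(2) unfolding pos_iff_comb by blast
  obtain d where d: "x = (\<Sum>t\<in>J. of_int (d t) *\<^sub>R t)"
    using assms(3) unfolding root_lattice_def int_comb_def by blast
  have "x = comb (\<lambda>t. if t \<in> J then d t else 0)"
    unfolding d comb_def using finite_S assms(1) by (intro sum.mono_neutral_cong_left) auto
  then have "d t = c t" if "t \<in> J" for t
    using comb_coeff_unique[of _ c t] c(1) that assms(1) by fastforce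
  then show ?thesis unfolding int_comb_def using d c(2) assms(1) by (intro exI[of _ d]) auto
qed

lemma minreps_coset_unique:
  assumes J: "J \<subseteq> S" and u: "u \<in> minreps S J" and v: "v \<in> weyl J" and uv: "u \<circ> v \<in> minreps S J"
  shows "v = id"
proof (rule ccontr)
  txt \<open>Write v = v' r_s reduced. Then v' s is a positive root in the span of J, so u (v' s) is
    positive, whereas (u v) s = - u (v' s) is positive as well since u v is minimal.\<close>
  assume "v \<noteq> id"
  obtain vs where vs: "set vs \<subseteq> J" "length vs = wlen J v" "word_fun vs = v"
    using reduced_word_exists[OF v] .
  have "vs \<noteq> []" using vs(3) \<open>v \<noteq> id\<close> by auto
  then obtain vs' s where vs': "vs = vs' @ [s]" using rev_exhaust by blast
  have s: "s \<in> J" "s \<in> R" and vs'J: "set vs' \<subseteq> J" using vs vs' J S_subset_R by auto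
  have v_eq: "v = word_fun vs' \<circ> refl s" using vs vs' by (simp add: word_fun_append)
  have "s \<noteq> 0" using s(2) zero_notin_R by blast
  have "pos (word_fun vs' s)"
  proof (rule ccontr)
    assume "\<not> pos (word_fun vs' s)"
    then have "wlen J v < wlen J (word_fun vs')"
      unfolding v_eq by (rule wlen_comp_refl_less[OF J word_fun_in_weyl[OF vs'J] s(1)])
    also have "\<dots> \<le> length vs'" using vs'J by (rule wlen_le)
    finally show False using vs(2) vs' by simp
  qed
  moreover have "finite J" using J finite_S finite_subset by blast
  then have "word_fun vs' s \<in> root_lattice J"
    using word_fun_in_root_lattice[OF J vs'J s(2)] int_comb_generator[OF _ s(1)]
    by (simp add: root_lattice_def)
  ultimately have "int_comb J (word_fun vs' s) (\<lambda>n. 0 \<le> n)"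
    by (rule pos_in_sub_root_lattice[OF J])
  moreover have "linear u" using u unfolding minreps_def by (blast intro: linear_weyl)
  ultimately have "pos (u (word_fun vs' s))"
    using nonneg_comb_image[of J u, OF \<open>finite J\<close> _ minreps_pos[OF J u]] by blast
  then have "neg (- u (word_fun vs' s))"
    using int_comb_scale[of S _ "\<lambda>n. 0 \<le> n" "\<lambda>n. n \<le> 0" "-1"] by simp
  moreover have "(u \<circ> v) s = - u (word_fun vs' s)"
    using refl_self[OF \<open>s \<noteq> 0\<close>]
    by (simp add: v_eq linear_neg[OF linear_word_fun] linear_neg[OF \<open>linear u\<close>])
  ultimately have "neg ((u \<circ> v) s)" by simp
  moreover have "(u \<circ> v) s \<in> R" using uv s(2) weyl_in_R unfolding minreps_def by blast
  ultimately show False using root_not_pos_and_neg minreps_pos[OF J uv s(1)] by blast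
qed

lemma minreps_coset_ex1:
  assumes J: "J \<subseteq> S" and g: "g \<in> weyl S"
  shows "\<exists>!u. u \<in> minreps S J \<and> u \<in> (\<lambda>v. g \<circ> v) ` weyl J"
proof -
  let ?C = "(\<lambda>v. g \<circ> v) ` weyl J"
  have "g \<in> ?C" using id_in_weyl[of J] by (intro image_eqI[of _ _ id]) auto
  then obtain u where u: "u \<in> ?C" and u_min: "\<And>u'. u' \<in> ?C \<Longrightarrow> wlen S u \<le> wlen S u'"
    using ex_has_least_nat[of "\<lambda>u. u \<in> ?C" g "wlen S"] by blast
  have "u \<circ> v \<in> ?C" if "v \<in> weyl J" for v
    using u that comp_in_weyl by (force simp: comp_assoc)
  moreover have "u \<in> weyl S" using u g comp_in_weyl weyl_mono[OF J] by blast
  ultimately have u_rep: "u \<in> minreps S J" using u_min unfolding minreps_def by blast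
  show ?thesis
  proof (rule ex1I[of _ u])
    fix u' assume u': "u' \<in> minreps S J \<and> u' \<in> ?C"
    obtain v v' where v: "v \<in> weyl J" "u = g \<circ> v" and v': "v' \<in> weyl J" "u' = g \<circ> v'"
      using u u' by blast
    obtain w where w: "w \<in> weyl J" "v \<circ> w = id" using weyl_inverse_exists[OF v(1)] .
    have "u' = u \<circ> (w \<circ> v')" using v(2) v'(2) w(2) by (metis comp_assoc id_comp)
    moreover have "w \<circ> v' = id"
      using minreps_coset_unique[OF J u_rep comp_in_weyl[OF w(1) v'(1)]] u' calculation by simp
    ultimately show "u' = u" by simp
  qed (use u u_rep in blast)
qed

lemma floorJ_in_coset:
  assumes "J \<subseteq> S" "g \<in> weyl S"
  shows "floorJ S J g \<in> (\<lambda>v. g \<circ> v) ` weyl J"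
  unfolding floorJ_def using theI'[OF minreps_coset_ex1[OF assms]] by blast

lemma qbg_edge_scaled_diff_in_root_lattice:
  assumes J: "J \<subseteq> S" and orth: "\<forall>s\<in>J. pair Lam s = 0"
    and e: "qbg_edge R S J u b w" and \<sigma>: "\<sigma> * pair Lam b \<in> \<int>"
  shows "\<sigma> *\<^sub>R (u Lam - w Lam) \<in> root_lattice S"
proof -
  have w: "w \<in> weyl S" and b: "b \<in> R" "pos b" and u: "u = floorJ S J (w \<circ> refl b)"
    using e unfolding qbg_edge_def minreps_def pos_roots_def by auto
  obtain v where v: "v \<in> weyl J" "u = w \<circ> refl b \<circ> v"
    using floorJ_in_coset[OF J comp_in_weyl[OF w refl_in_weyl[OF b]]] u by blast
  have "u Lam = w (refl b Lam)" using v weyl_fixes_orthogonal[OF orth v(1)] by simp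
  also have "\<dots> = w Lam - pair Lam b *\<^sub>R w b"
    using linear_weyl[OF w] by (simp add: refl_def linear_diff linear_scale)
  finally have "u Lam - w Lam = - pair Lam b *\<^sub>R w b" by simp
  moreover obtain m where "\<sigma> * pair Lam b = of_int m" using \<sigma> by (elim Ints_cases)
  ultimately have "\<sigma> *\<^sub>R (u Lam - w Lam) = of_int (- m) *\<^sub>R w b" by simp
  also have "\<dots> \<in> root_lattice S"
    using root_in_root_lattice[OF weyl_in_R[OF w b(1)]] by (rule root_lattice_scale)
  finally show ?thesis .
qed

end

theorem lemma4p6:
  fixes R S :: "'a::euclidean_space set" and Lam :: 'a
    and x y :: "'a \<Rightarrow> 'a" and \<sigma> :: real
    and ws :: "('a \<Rightarrow> 'a) list" and bs :: "'a list"
  assumes "root_system R" and "irreducible_rs R" and "simple_system R S"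
    and "\<forall>s\<in>S. pair Lam s \<in> \<nat>"
    and "J = {s\<in>S. pair Lam s = 0}"
    and "x \<in> minreps S J" and "y \<in> minreps S J"
    and "\<sigma> \<in> \<rat>" and "0 < \<sigma>" and "\<sigma> < 1"
    and "qbg_path R S J ws bs" and "hd ws = x" and "last ws = y"
    and "\<forall>k < length bs. \<sigma> * pair Lam (bs ! k) \<in> \<int>"
  shows "\<sigma> *\<^sub>R (x Lam - y Lam) \<in> root_lattice S"
proof -
  interpret simple_root_system R S using assms(1,3) by unfold_locales
  have J: "J \<subseteq> S" and orth: "\<forall>s\<in>J. pair Lam s = 0" using assms(5) by auto
  have len: "length ws = Suc (length bs)"
    and edge: "\<And>k. k < length bs \<Longrightarrow> qbg_edge R S J (ws ! k) (bs ! k) (ws ! Suc k)"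
    using assms(11) unfolding qbg_path_def by auto
  have "x = ws ! 0" using assms(12) len by (cases ws) auto
  moreover have "y = ws ! length bs" using assms(13) len last_conv_nth[of ws] by force
  ultimately have "\<sigma> *\<^sub>R (x Lam - y Lam) = (\<Sum>k<length bs. \<sigma> *\<^sub>R ((ws ! k) Lam - (ws ! Suc k) Lam))"
    by (simp add: sum_lessThan_telescope'[of "\<lambda>k. (ws ! k) Lam"] flip: scaleR_sum_right)
  also have "\<dots> \<in> root_lattice S"
    using qbg_edge_scaled_diff_in_root_lattice[OF J orth edge] assms(14)
    by (intro root_lattice_sum) auto
  finally show ?thesis .
qed

end
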